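(* Let $(A(n))_{n\ge1}$ be an i.i.d. sequence of random topical operators on $\mathbb R^d$ with the memory loss property and let $\phi:\mathbb R^d\to\mathbb R$ be topical. Suppose there exist $\sigma>0$ and a $\sigma$-finite measure $\alpha$ on $\mathbb R^d$, whose image by $x\mapsto(\bar x,\phi(x))$ is $\nu_0\otimes$(Lebesgue measure), such that for every bounded $\mathbb R^d$-valued random variable $X^0$ independent of $(A(n))$ and every continuous compactly supported $h$ on $\mathbb R^d$, $$\lim_n\sup_{u\in\mathbb R}\Big|\sigma\sqrt{2\pi n}\,\mathbb E\big[h(x(n,X^0)-n\gamma\mathbf 1-u\mathbf 1)\big]-\mathbb E\Big[e^{-\frac{(u+\phi(X^0))^2}{2n\sigma^2}}\Big]\alpha(h)\Big|=0.$$ Then $(A(n))$ is algebraically non arithmetic.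
   Context: A map $A:\mathbb R^d\to\mathbb R^d$ is topical if it is isotone ($x\le y$ coordinatewise implies $Ax\le Ay$) and additively homogeneous ($A(x+a\mathbf 1)=Ax+a\mathbf 1$, $\mathbf 1=(1,\dots,1)'$). A map $\phi:\mathbb R^d\to\mathbb R$ is topical if isotone and $\phi(x+a\mathbf 1)=\phi(x)+a$. $Top_d$ is the set of topical operators, with the topology of uniform convergence on compact sets. $\mathbb{PR}^d_{\max}$ is the quotient of $\mathbb R^d$ by $x\sim y\iff x-y\in\mathbb R\mathbf 1$, $\bar x$ the class of $x$. $A$ has rank 1 if $\overline{Ax}$ does not depend on $x$. The sequence has the memory loss property if some $A(N)\cdots A(1)$ has rank 1 with positive probability. $x(0,X^0)=X^0$, $x(n,X^0)=A(n)x(n-1,X^0)$; $\gamma$ is the Lyapunov exponent ($x(n,X^0)/n\to\gamma\mathbf 1$ a.s.). $\nu_0$ is the unique invariant probability measure on $\mathbb{PR}^d_{\max}$ of the Markov chain $\bar x(n,\cdot)$. $S_A$ is the support of the law of $A(1)$ and $T_A$ the semigroup generated by $S_A$. The sequence is algebraically arithmetic if there are $a,b\in\mathbb R$ and $\theta\in Top_d$ of rank 1 such that for all $A\in S_A$ and all $\theta'\in T_A$ of rank 1, $(\theta A\theta'-\theta\theta')(\mathbb R^d)\subset(a+b\mathbb Z)\mathbf 1$; otherwise it is algebraically non arithmetic. *)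

theory Defs
  imports "HOL-Probability.Probability"
begin

definition ones :: "real^'d" where
  "ones = (\<chi> i. 1)"

definition topical_op :: "(real^'d \<Rightarrow> real^'d) \<Rightarrow> bool" where
  "topical_op f \<longleftrightarrow>
     (\<forall>x y. (\<forall>i. x$i \<le> y$i) \<longrightarrow> (\<forall>i. f x $ i \<le> f y $ i)) \<and>
     (\<forall>x a. f (x + a *\<^sub>R ones) = f x + a *\<^sub>R ones)"

definition topical_fun :: "(real^'d \<Rightarrow> real) \<Rightarrow> bool" where
  "topical_fun f \<longleftrightarrow>
     (\<forall>x y. (\<forall>i. x$i \<le> y$i) \<longrightarrow> f x \<le> f y) \<and>
     (\<forall>x a. f (x + a *\<^sub>R ones) = f x + a)"

text \<open>Rank one: the projective class of f x does not depend on x.\<close>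
definition rank_one :: "(real^'d \<Rightarrow> real^'d) \<Rightarrow> bool" where
  "rank_one f \<longleftrightarrow> (\<forall>x y. \<exists>c. f x - f y = c *\<^sub>R ones)"

text \<open>Projective space PR^d_max is represented by the hyperplane {x. sum of coordinates = 0};
  proj x is the representative of the class of x.\<close>
definition proj :: "real^'d \<Rightarrow> real^'d" where
  "proj x = x - ((\<Sum>i\<in>UNIV. x$i) / real CARD('d)) *\<^sub>R ones"

text \<open>Measurable space of operators: sigma-algebra generated by the evaluations
  (on Top_d this is the Borel sigma-algebra of uniform convergence on compacts).\<close>
definition op_space :: "(real^'d \<Rightarrow> real^'d) measure" where
  "op_space = PiM UNIV (\<lambda>_. borel)"

text \<open>prodop A n \<omega> = A(n) \<circ> ... \<circ> A(1), so x(n,X0) = prodop A n \<omega> X0.\<close>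
fun prodop :: "(nat \<Rightarrow> 'w \<Rightarrow> real^'d \<Rightarrow> real^'d) \<Rightarrow> nat \<Rightarrow> 'w \<Rightarrow> real^'d \<Rightarrow> real^'d" where
  "prodop A 0 \<omega> = id"
| "prodop A (Suc n) \<omega> = A (Suc n) \<omega> \<circ> prodop A n \<omega>"

definition supp_law :: "'w measure \<Rightarrow> ('w \<Rightarrow> real^'d \<Rightarrow> real^'d) \<Rightarrow> (real^'d \<Rightarrow> real^'d) set" where
  "supp_law M B = {C. topical_op C \<and>
     (\<forall>K e. compact K \<and> e > 0 \<longrightarrow>
        measure M {\<omega> \<in> space M. \<forall>x\<in>K. dist (B \<omega> x) (C x) < e} > 0)}"

inductive_set gen_semigroup :: "(real^'d \<Rightarrow> real^'d) set \<Rightarrow> (real^'d \<Rightarrow> real^'d) set"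
  for S where
  base: "f \<in> S \<Longrightarrow> f \<in> gen_semigroup S"
| comp: "f \<in> gen_semigroup S \<Longrightarrow> g \<in> gen_semigroup S \<Longrightarrow> f \<circ> g \<in> gen_semigroup S"

definition alg_arithmetic :: "(real^'d \<Rightarrow> real^'d) set \<Rightarrow> bool" where
  "alg_arithmetic S \<longleftrightarrow>
     (\<exists>a b :: real. \<exists>\<theta>. topical_op \<theta> \<and> rank_one \<theta> \<and>
        (\<forall>B\<in>S. \<forall>\<theta>'\<in>gen_semigroup S. rank_one \<theta>' \<longrightarrow>
           (\<forall>x. \<exists>k::int. \<theta> (B (\<theta>' x)) - \<theta> (\<theta>' x) = (a + b * of_int k) *\<^sub>R ones)))"

definition invariant_pr :: "'w measure \<Rightarrow> ('w \<Rightarrow> real^'d \<Rightarrow> real^'d) \<Rightarrow> (real^'d) measure \<Rightarrow> bool" where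
  "invariant_pr M B \<nu> \<longleftrightarrow> prob_space \<nu> \<and> sets \<nu> = sets borel \<and>
     (AE x in \<nu>. proj x = x) \<and>
     distr (\<nu> \<Otimes>\<^sub>M M) borel (\<lambda>(x, \<omega>). proj (B \<omega> x)) = \<nu>"

end

theory Submission
  imports Defs
begin

text \<open>
  Suppose the support \<open>S\<^sub>A\<close> were algebraically arithmetic with data \<open>a, b, \<theta>\<close>. Since topical
  maps are uniformly Lipschitz, uniform closeness on a compact set is controlled by finitely many
  points, and the law of \<open>A(1)\<close> is carried by \<open>S\<^sub>A\<close>. Memory loss then yields a rank-one
  \<open>\<theta>' = A(N)\<cdots>A(1)\<close> in \<open>T\<^sub>A\<close>, and almost surely every \<open>A(n)\<cdots>A(1)\<theta>'\<close> is again a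
  rank-one element of \<open>T\<^sub>A\<close>. So for \<open>y = \<theta>'(0)\<close> and a coordinate \<open>\<psi>\<close> of \<open>\<theta>\<close>, the
  increments \<open>\<psi>(x(n,y)) - \<psi>(y)\<close> lie in \<open>n a + \<beta>\<int>\<close> for some \<open>\<beta> > 0\<close>.

  Take \<open>h \<ge> 0\<close> continuous with compact support where \<open>|\<psi>| < \<beta>/2\<close>. As \<open>\<psi> - \<phi>\<close> depends only on
  the projective class, the image of \<open>{h \<noteq> 0}\<close> under \<open>x \<mapsto> (proj x, \<phi> x)\<close> is a strip over a ball,
  so \<open>\<alpha>(h) > 0\<close>. In the local limit theorem for \<open>X\<^sup>0 = y\<close>, choose the shift \<open>u\<close> so that \<open>\<psi>\<close>
  of the recentred orbit lies in \<open>\<beta>/2 + \<beta>\<int>\<close>: there \<open>h\<close> vanishes, while the Gaussian factor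
  stays above \<open>1/2\<close>.
\<close>

section \<open>Topical maps\<close>

lemma ones_nth [simp]: "ones $ i = 1"
  by (simp add: ones_def)

lemma topical_fun_shift: "topical_fun f \<Longrightarrow> f (x + a *\<^sub>R ones) = f x + a"
  unfolding topical_fun_def by blast

lemma topical_op_shift: "topical_op f \<Longrightarrow> f (x + a *\<^sub>R ones) = f x + a *\<^sub>R ones"
  unfolding topical_op_def by blast

lemma topical_fun_component: "topical_op f \<Longrightarrow> topical_fun (\<lambda>x. f x $ i)"
  unfolding topical_op_def topical_fun_def by simp

lemma topical_fun_le_norm:
  assumes f: "topical_fun f"
  shows "f x \<le> f z + norm (x - z)"
proof -
  have "x $ i \<le> (z + norm (x - z) *\<^sub>R ones) $ i" for i
    using component_le_norm_cart[of "x - z" i] by simp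
  then have "f x \<le> f (z + norm (x - z) *\<^sub>R ones)"
    using f unfolding topical_fun_def by blast
  then show ?thesis
    using topical_fun_shift[OF f] by simp
qed

lemma topical_fun_dist_le:
  assumes "topical_fun f"
  shows "dist (f x) (f z) \<le> dist x z"
  using topical_fun_le_norm[OF assms, of x z] topical_fun_le_norm[OF assms, of z x]
  by (simp add: dist_real_def dist_norm norm_minus_commute)

lemma continuous_on_topical_fun: "topical_fun f \<Longrightarrow> continuous_on S f"
  by (rule lipschitz_on_continuous_on[of 1], rule lipschitz_onI) (simp_all add: topical_fun_dist_le)

lemma topical_op_dist_le:
  fixes f :: "real^'d \<Rightarrow> real^'d"
  assumes f: "topical_op f"
  shows "dist (f x) (f z) \<le> real CARD('d) * dist x z"
proof -
  have "dist (f x) (f z) \<le> (\<Sum>i\<in>UNIV. dist (f x $ i) (f z $ i))"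
    using norm_le_l1_cart[of "f x - f z"] by (simp add: dist_norm dist_real_def)
  also have "\<dots> \<le> (\<Sum>i\<in>(UNIV::'d set). dist x z)"
    by (intro sum_mono topical_fun_dist_le topical_fun_component[OF f])
  finally show ?thesis
    by simp
qed

lemma continuous_on_topical_op: "topical_op f \<Longrightarrow> continuous_on S f"
  by (rule lipschitz_on_continuous_on) (auto intro: lipschitz_onI topical_op_dist_le)

lemma rank_one_comp:
  assumes f: "topical_op f" and g: "rank_one g"
  shows "rank_one (f \<circ> g)"
  unfolding rank_one_def
proof (intro allI)
  fix x y
  obtain c where "g x = g y + c *\<^sub>R ones"
    using g unfolding rank_one_def by (metis add.commute diff_add_cancel)
  then show "\<exists>c. (f \<circ> g) x - (f \<circ> g) y = c *\<^sub>R ones"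
    using topical_op_shift[OF f] by auto
qed

definition mean :: "real^'d \<Rightarrow> real" where
  "mean z = (\<Sum>i\<in>UNIV. z $ i) / real CARD('d)"

lemma proj_add_mean: "proj z + mean z *\<^sub>R ones = z"
  by (simp add: proj_def mean_def)

lemma topical_fun_proj: "topical_fun f \<Longrightarrow> f z = f (proj z) + mean z"
  using topical_fun_shift[of f "proj z" "mean z"] by (simp add: proj_add_mean)

lemma continuous_on_proj: "continuous_on S proj"
  unfolding proj_def by (intro continuous_intros) simp

lemma norm_le_proj_topical_fun:
  fixes z :: "real^'d"
  assumes f: "topical_fun f"
  shows "norm z \<le> norm (proj z) + (\<bar>f z\<bar> + \<bar>f 0\<bar> + norm (proj z)) * norm (ones :: real^'d)"
proof -
  have "\<bar>f (proj z) - f 0\<bar> \<le> norm (proj z)"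
    using topical_fun_dist_le[OF f, of "proj z" 0] by (simp add: dist_real_def)
  then have "\<bar>mean z\<bar> \<le> \<bar>f z\<bar> + \<bar>f 0\<bar> + norm (proj z)"
    using topical_fun_proj[OF f, of z] by linarith
  then have "norm (mean z *\<^sub>R (ones :: real^'d)) \<le> (\<bar>f z\<bar> + \<bar>f 0\<bar> + norm (proj z)) * norm (ones :: real^'d)"
    by (simp add: mult_right_mono)
  then show ?thesis
    using norm_triangle_ineq[of "proj z" "mean z *\<^sub>R ones"] by (simp add: proj_add_mean)
qed

section \<open>The law of a random operator is carried by its support\<close>

lemma compact_less_iff_countable_dense:
  fixes g :: "'a::metric_space \<Rightarrow> real"
  assumes K: "compact K" and g: "continuous_on K g" and T: "T \<subseteq> K" "K \<subseteq> closure T"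
  shows "(\<forall>x\<in>K. g x < e) \<longleftrightarrow> (\<exists>m::nat. \<forall>q\<in>T. g q \<le> e - 1 / real (Suc m))"
proof
  assume less: "\<forall>x\<in>K. g x < e"
  show "\<exists>m::nat. \<forall>q\<in>T. g q \<le> e - 1 / real (Suc m)"
  proof (cases "K = {}")
    case True
    then show ?thesis using T by auto
  next
    case False
    then obtain x0 where x0: "x0 \<in> K" "\<forall>x\<in>K. g x \<le> g x0"
      using continuous_attains_sup[OF K False g] by blast
    obtain m where "inverse (real (Suc m)) < e - g x0"
      using less x0(1) reals_Archimedean[of "e - g x0"] by auto
    then have "\<forall>q\<in>T. g q \<le> e - 1 / real (Suc m)"
      using x0 T(1) by (force simp: inverse_eq_divide)
    then show ?thesis ..
  qed
next
  assume "\<exists>m::nat. \<forall>q\<in>T. g q \<le> e - 1 / real (Suc m)"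
  then obtain m :: nat where m: "\<forall>q\<in>T. g q \<le> e - 1 / real (Suc m)" by blast
  have "closed {x\<in>K. g x \<le> e - 1 / real (Suc m)}"
    by (intro continuous_on_closed_Collect_le g continuous_on_const compact_imp_closed K)
  then have "closure T \<subseteq> {x\<in>K. g x \<le> e - 1 / real (Suc m)}"
    using m T(1) by (intro closure_minimal) auto
  show "\<forall>x\<in>K. g x < e"
  proof
    fix x assume "x \<in> K"
    then have "g x \<le> e - 1 / real (Suc m)"
      using \<open>closure T \<subseteq> _\<close> T(2) by blast
    moreover have "0 < 1 / real (Suc m)" by simp
    ultimately show "g x < e" by linarith
  qed
qed

lemma measurable_op_space_eval:
  "B \<in> measurable M op_space \<Longrightarrow> (\<lambda>\<omega>. B \<omega> x) \<in> borel_measurable M"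
  unfolding op_space_def by (erule measurable_compose) (rule measurable_component_singleton; simp)

lemma sets_uniformly_close:
  fixes B :: "'w \<Rightarrow> real^'d \<Rightarrow> real^'d"
  assumes B: "B \<in> measurable M op_space" "\<forall>\<omega>\<in>space M. topical_op (B \<omega>)"
    and K: "compact K" and C: "topical_op C"
  shows "{\<omega>\<in>space M. \<forall>x\<in>K. dist (B \<omega> x) (C x) < e} \<in> sets M"
proof -
  obtain T where T: "countable T" "T \<subseteq> K" "K \<subseteq> closure T"
    by (rule separable)
  have [measurable]: "(\<lambda>\<omega>. B \<omega> x) \<in> borel_measurable M" for x
    using B(1) by (rule measurable_op_space_eval)
  have "continuous_on K (\<lambda>x. dist (B \<omega> x) (C x))" if "\<omega> \<in> space M" for \<omega>
    using B(2) that C by (intro continuous_on_dist continuous_on_topical_op) auto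
  then have "{\<omega>\<in>space M. \<forall>x\<in>K. dist (B \<omega> x) (C x) < e} =
      {\<omega>\<in>space M. \<exists>m::nat. \<forall>q\<in>T. dist (B \<omega> q) (C q) \<le> e - 1 / real (Suc m)}"
    using compact_less_iff_countable_dense[OF K _ T(2,3)] by blast
  also have "\<dots> \<in> sets M"
    using T(1) by (intro sets.sets_Collect_countable_Ex sets.sets_Collect_countable_All') measurable
  finally show ?thesis .
qed

definition pointwise_nbhd :: "((real^'d) \<times> (real^'d)) list \<Rightarrow> nat \<Rightarrow> (real^'d \<Rightarrow> real^'d) set" where
  "pointwise_nbhd xs k = {f. \<forall>(x, y)\<in>set xs. dist (f x) y < 1 / real (Suc k)}"

lemma pointwise_nbhd_sets: "pointwise_nbhd xs k \<in> sets op_space"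
proof -
  have "Measurable.pred op_space (\<lambda>f. \<forall>(x, y)\<in>set xs. dist (f x) y < 1 / real (Suc k))"
    unfolding op_space_def by measurable
  then show ?thesis
    by (simp add: pointwise_nbhd_def pred_def op_space_def space_PiM)
qed

lemma topical_op_pointwise_nbhd_uniformly_close:
  fixes C :: "real^'d \<Rightarrow> real^'d"
  assumes D: "closure D = UNIV" and C: "topical_op C" and K: "compact K" and e: "e > 0"
  obtains xs k where "xs \<in> lists (D \<times> D)" "C \<in> pointwise_nbhd xs k"
    "\<And>F x. topical_op F \<Longrightarrow> F \<in> pointwise_nbhd xs k \<Longrightarrow> x \<in> K \<Longrightarrow> dist (F x) (C x) < e"
proof -
  have dense: "\<exists>q\<in>D. dist q x < d" if "d > 0" for x d
    using D that closure_approachable[of x D] by auto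
  define \<delta> where "\<delta> = e / (4 * real CARD('d))"
  have \<delta>: "\<delta> > 0" "real CARD('d) * \<delta> = e / 4"
    using e by (simp_all add: \<delta>_def)
  have "K \<subseteq> (\<Union>q\<in>D. ball q \<delta>)"
    using dense[OF \<delta>(1)] by (auto simp: dist_commute)
  then obtain Q where Q: "Q \<subseteq> D" "finite Q" "K \<subseteq> (\<Union>q\<in>Q. ball q \<delta>)"
    using compactE_image[OF K, of D "\<lambda>q. ball q \<delta>"] by blast
  obtain k :: nat where k: "1 / real (Suc k) < e / 4"
    using reals_Archimedean[of "e / 4"] e by (auto simp: inverse_eq_divide)
  have "\<forall>q. \<exists>y. y \<in> D \<and> dist y (C q) < 1 / real (Suc k)"
    using dense[of "1 / real (Suc k)"] by auto
  then obtain r where r: "\<And>q. r q \<in> D \<and> dist (r q) (C q) < 1 / real (Suc k)"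
    by metis
  obtain qs where qs: "set qs = Q"
    using finite_list[OF Q(2)] by blast
  define xs where "xs = map (\<lambda>q. (q, r q)) qs"
  show ?thesis
  proof
    show "xs \<in> lists (D \<times> D)" "C \<in> pointwise_nbhd xs k"
      using qs Q(1) r by (auto simp: xs_def pointwise_nbhd_def dist_commute)
    fix F x assume F: "topical_op F" "F \<in> pointwise_nbhd xs k" and x: "x \<in> K"
    then obtain q where q: "q \<in> Q" "dist q x < \<delta>"
      using Q(3) by auto
    have "dist x q \<le> \<delta>"
      using q(2) by (simp add: dist_commute)
    then have "real CARD('d) * dist x q \<le> e / 4"
      using \<delta>(2) by (metis mult_left_mono of_nat_0_le_iff)
    then have "dist (F x) (F q) \<le> e / 4" "dist (C q) (C x) \<le> e / 4"
      using topical_op_dist_le[OF F(1), of x q] topical_op_dist_le[OF C, of q x]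
      by (simp_all add: dist_commute)
    moreover have "dist (F q) (r q) < 1 / real (Suc k)"
      using F(2) q(1) qs by (auto simp: xs_def pointwise_nbhd_def)
    ultimately show "dist (F x) (C x) < e"
      using r[of q] k dist_triangle[of "F x" "C x" "F q"] dist_triangle[of "F q" "C x" "r q"]
        dist_triangle[of "r q" "C x" "C q"] by linarith
  qed
qed

text \<open>
  Outside the support, \<open>B \<omega>\<close> lies in a neighbourhood \<open>pointwise_nbhd xs k\<close> with \<open>xs\<close> drawn from a
  countable dense set that \<open>A\<close> hits with probability zero; there are only countably many of these.
\<close>
lemma AE_in_supp_law:
  fixes A B :: "'w \<Rightarrow> real^'d \<Rightarrow> real^'d"
  assumes M: "finite_measure M"
    and A: "A \<in> measurable M op_space" "\<forall>\<omega>\<in>space M. topical_op (A \<omega>)"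
    and B: "B \<in> measurable M op_space" "\<forall>\<omega>\<in>space M. topical_op (B \<omega>)"
    and law: "distr M op_space B = distr M op_space A"
  shows "AE \<omega> in M. B \<omega> \<in> supp_law M A"
proof -
  obtain D :: "(real^'d) set" where D: "countable D" "closure D = UNIV"
    using separable[of "UNIV :: (real^'d) set"] by (metis top.extremum_uniqueI)
  define I where "I = {(xs, k). xs \<in> lists (D \<times> D) \<and> A -` pointwise_nbhd xs k \<inter> space M \<in> null_sets M}"
  have countable: "countable I"
    by (rule countable_subset[of _ "lists (D \<times> D) \<times> UNIV"]) (auto simp: I_def D(1))
  have null: "B -` pointwise_nbhd xs k \<inter> space M \<in> null_sets M" if "(xs, k) \<in> I" for xs k
  proof -
    have "emeasure M (B -` pointwise_nbhd xs k \<inter> space M) = emeasure M (A -` pointwise_nbhd xs k \<inter> space M)"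
      using emeasure_distr[OF A(1) pointwise_nbhd_sets] emeasure_distr[OF B(1) pointwise_nbhd_sets] law
      by simp
    then show ?thesis
      using that measurable_sets[OF B(1) pointwise_nbhd_sets] by (simp add: I_def null_sets_def)
  qed
  have cover: "{\<omega>\<in>space M. B \<omega> \<notin> supp_law M A} \<subseteq> (\<Union>(xs, k)\<in>I. B -` pointwise_nbhd xs k \<inter> space M)"
  proof
    fix \<omega> assume "\<omega> \<in> {\<omega>\<in>space M. B \<omega> \<notin> supp_law M A}"
    then have \<omega>: "\<omega> \<in> space M" "topical_op (B \<omega>)" "B \<omega> \<notin> supp_law M A"
      using B(2) by auto
    then obtain K e where K: "compact K" "e > 0"
      and small: "\<not> measure M {\<omega>'\<in>space M. \<forall>x\<in>K. dist (A \<omega>' x) (B \<omega> x) < e} > 0"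
      unfolding supp_law_def by auto
    let ?V = "{\<omega>'\<in>space M. \<forall>x\<in>K. dist (A \<omega>' x) (B \<omega> x) < e}"
    \<comment> \<open>\<open>measure\<close> is \<open>0\<close> on non-measurable sets, so the measurability of \<open>?V\<close> is essential\<close>
    have "measure M ?V = 0"
      using small measure_nonneg[of M ?V] by linarith
    then have "?V \<in> null_sets M"
      using sets_uniformly_close[OF A K(1) \<omega>(2)] finite_measure.emeasure_eq_measure[OF M]
      by (simp add: null_sets_def)
    obtain xs k where xs: "xs \<in> lists (D \<times> D)" "B \<omega> \<in> pointwise_nbhd xs k"
      and close: "\<And>F x. topical_op F \<Longrightarrow> F \<in> pointwise_nbhd xs k \<Longrightarrow> x \<in> K \<Longrightarrow> dist (F x) (B \<omega> x) < e"
      using topical_op_pointwise_nbhd_uniformly_close[OF D(2) \<omega>(2) K] by blast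
    have "A -` pointwise_nbhd xs k \<inter> space M \<subseteq> ?V"
      using close A(2) by blast
    then have "(xs, k) \<in> I"
      using null_sets_subset[OF \<open>?V \<in> null_sets M\<close>] measurable_sets[OF A(1) pointwise_nbhd_sets] xs(1)
      by (simp add: I_def)
    then show "\<omega> \<in> (\<Union>(xs, k)\<in>I. B -` pointwise_nbhd xs k \<inter> space M)"
      using xs(2) \<omega>(1) by blast
  qed
  have "(\<Union>(xs, k)\<in>I. B -` pointwise_nbhd xs k \<inter> space M) \<in> null_sets M"
    using countable null by (intro null_sets_UN') auto
  then show ?thesis
    using cover by (rule AE_I')
qed

lemma AE_iid_in_supp_law:
  fixes A :: "nat \<Rightarrow> 'w \<Rightarrow> real^'d \<Rightarrow> real^'d"
  assumes M: "finite_measure M"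
    and meas: "\<forall>n\<ge>1. A n \<in> measurable M op_space"
    and law: "\<forall>n\<ge>1. distr M op_space (A n) = distr M op_space (A 1)"
    and topical: "\<forall>n\<ge>1. \<forall>\<omega>\<in>space M. topical_op (A n \<omega>)"
  shows "AE \<omega> in M. \<forall>n\<ge>1. A n \<omega> \<in> supp_law M (A 1)"
proof -
  have "AE \<omega> in M. n \<ge> 1 \<longrightarrow> A n \<omega> \<in> supp_law M (A 1)" for n
  proof (cases "n \<ge> 1")
    case True
    have "AE \<omega> in M. A n \<omega> \<in> supp_law M (A 1)"
    proof (rule AE_in_supp_law[OF M])
      show "A 1 \<in> measurable M op_space" "A n \<in> measurable M op_space"
        using meas True by blast+
      show "\<forall>\<omega>\<in>space M. topical_op (A 1 \<omega>)" "\<forall>\<omega>\<in>space M. topical_op (A n \<omega>)"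
        using topical True by blast+
      show "distr M op_space (A n) = distr M op_space (A 1)"
        using law True by blast
    qed
    then show ?thesis
      by (rule AE_mp) simp
  qed simp
  then show ?thesis
    by (simp add: AE_all_countable)
qed

lemma ex_in_pos_measure_AE:
  assumes "measure M R > 0" and "AE x in M. P x"
  shows "\<exists>x\<in>R. P x"
proof (rule ccontr)
  assume none: "\<not> (\<exists>x\<in>R. P x)"
  have R: "R \<in> sets M"
    using assms(1) measure_notin_sets by force
  obtain N where N: "{x \<in> space M. \<not> P x} \<subseteq> N" "emeasure M N = 0" "N \<in> sets M"
    using assms(2) by (rule AE_E)
  have "R \<subseteq> N"
    using none sets.sets_into_space[OF R] N(1) by blast
  then have "emeasure M R = 0"
    using emeasure_mono[OF _ N(3)] N(2) by simp
  then show False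
    using assms(1) by (simp add: measure_def)
qed

section \<open>Arithmetic supports force lattice-valued orbits\<close>

lemma prodop_in_gen_semigroup:
  assumes A: "\<forall>n\<ge>1. A n \<omega> \<in> S" and n: "n \<ge> 1"
  shows "prodop A n \<omega> \<in> gen_semigroup S"
  using n
proof (induction n rule: dec_induct)
  case base
  then show ?case
    using A by (simp add: gen_semigroup.base)
next
  case (step m)
  have "A (Suc m) \<omega> \<in> S"
    using A by simp
  then show ?case
    unfolding prodop.simps using step.IH by (rule gen_semigroup.comp[OF gen_semigroup.base])
qed

lemma rank_one_prodop_comp:
  assumes "\<forall>n\<ge>1. topical_op (A n \<omega>)" and "rank_one \<theta>"
  shows "rank_one (prodop A n \<omega> \<circ> \<theta>)"
proof (induction n)
  case 0
  then show ?case
    using assms(2) by simp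
next
  case (Suc n)
  have "prodop A (Suc n) \<omega> \<circ> \<theta> = A (Suc n) \<omega> \<circ> (prodop A n \<omega> \<circ> \<theta>)"
    by (simp add: comp_assoc)
  moreover have "topical_op (A (Suc n) \<omega>)"
    using assms(1) by simp
  ultimately show ?case
    using rank_one_comp[OF _ Suc.IH] by (simp only:)
qed

lemma arithmetic_increments_prodop:
  assumes arith: "\<forall>B\<in>S. \<forall>\<theta>'\<in>gen_semigroup S. rank_one \<theta>' \<longrightarrow>
      (\<forall>x. \<exists>k::int. \<theta> (B (\<theta>' x)) - \<theta> (\<theta>' x) = (a + b * of_int k) *\<^sub>R ones)"
    and S: "\<forall>B\<in>S. topical_op B" and A: "\<forall>n\<ge>1. A n \<omega> \<in> S"
    and \<theta>': "\<theta>' \<in> gen_semigroup S" "rank_one \<theta>'"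
  shows "\<exists>k::int. \<theta> (prodop A n \<omega> (\<theta>' x)) - \<theta> (\<theta>' x) = (real n * a + b * of_int k) *\<^sub>R ones"
proof (induction n)
  case 0
  show ?case
    by (intro exI[of _ 0]) simp
next
  case (Suc n)
  then obtain k :: int where k: "\<theta> (prodop A n \<omega> (\<theta>' x)) - \<theta> (\<theta>' x) = (real n * a + b * of_int k) *\<^sub>R ones"
    by blast
  have G: "prodop A n \<omega> \<circ> \<theta>' \<in> gen_semigroup S"
  proof (cases "n = 0")
    case True
    then show ?thesis
      using \<theta>'(1) by simp
  next
    case False
    then show ?thesis
      using gen_semigroup.comp[OF prodop_in_gen_semigroup[of A \<omega> S n] \<theta>'(1)] A by simp
  qed
  have "\<forall>n\<ge>1. topical_op (A n \<omega>)"
    using A S by simp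
  then have R: "rank_one (prodop A n \<omega> \<circ> \<theta>')"
    using \<theta>'(2) by (rule rank_one_prodop_comp)
  have "A (Suc n) \<omega> \<in> S"
    using A by simp
  then obtain k' :: int where k':
    "\<theta> (A (Suc n) \<omega> ((prodop A n \<omega> \<circ> \<theta>') x)) - \<theta> ((prodop A n \<omega> \<circ> \<theta>') x) = (a + b * of_int k') *\<^sub>R ones"
    using arith[rule_format, OF \<open>A (Suc n) \<omega> \<in> S\<close> G R] by blast
  have "\<theta> (prodop A (Suc n) \<omega> (\<theta>' x)) - \<theta> (\<theta>' x) =
      (\<theta> (A (Suc n) \<omega> ((prodop A n \<omega> \<circ> \<theta>') x)) - \<theta> ((prodop A n \<omega> \<circ> \<theta>') x))
      + (\<theta> (prodop A n \<omega> (\<theta>' x)) - \<theta> (\<theta>' x))"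
    by simp
  also have "\<dots> = (real (Suc n) * a + b * of_int (k + k')) *\<^sub>R ones"
    unfolding k k' by (simp add: algebra_simps flip: scaleR_add_left)
  finally show ?case ..
qed

lemma int_multiples_in_pos_lattice: "\<exists>\<beta>::real>0. \<forall>k::int. \<exists>j::int. b * of_int k = \<beta> * of_int j"
proof (cases "b = 0")
  case True
  then show ?thesis
    by (intro exI[of _ 1]) (auto intro: exI[of _ 0])
next
  case False
  have "b * of_int k = \<bar>b\<bar> * of_int (if b > 0 then k else - k)" for k :: int
    by simp
  then show ?thesis
    using False by (intro exI[of _ "\<bar>b\<bar>"]) auto
qed

lemma AE_lattice_orbit:
  fixes A :: "nat \<Rightarrow> 'w \<Rightarrow> real^'d \<Rightarrow> real^'d"
  assumes arith: "\<forall>B\<in>S. \<forall>\<theta>'\<in>gen_semigroup S. rank_one \<theta>' \<longrightarrow>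
      (\<forall>x. \<exists>k::int. \<theta> (B (\<theta>' x)) - \<theta> (\<theta>' x) = (a + b * of_int k) *\<^sub>R ones)"
    and S: "\<forall>B\<in>S. topical_op B" and A: "AE \<omega> in M. \<forall>n\<ge>1. A n \<omega> \<in> S"
    and \<theta>': "\<theta>' \<in> gen_semigroup S" "rank_one \<theta>'"
    and \<beta>: "\<forall>k::int. \<exists>j::int. b * of_int k = \<beta> * of_int j"
  shows "AE \<omega> in M. \<forall>n. \<exists>k::int. \<theta> (prodop A n \<omega> (\<theta>' x)) $ i = \<theta> (\<theta>' x) $ i + real n * a + \<beta> * of_int k"
  using A
proof (rule AE_mp, intro AE_I2 impI allI)
  fix \<omega> n assume "\<forall>n\<ge>1. A n \<omega> \<in> S"
  then obtain k :: int where "\<theta> (prodop A n \<omega> (\<theta>' x)) - \<theta> (\<theta>' x) = (real n * a + b * of_int k) *\<^sub>R ones"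
    using arithmetic_increments_prodop[where A = A and \<omega> = \<omega>, OF arith S _ \<theta>'] by blast
  then have "(\<theta> (prodop A n \<omega> (\<theta>' x)) - \<theta> (\<theta>' x)) $ i = real n * a + b * of_int k"
    by simp
  moreover obtain j :: int where "b * of_int k = \<beta> * of_int j"
    using \<beta> by blast
  ultimately have "\<theta> (prodop A n \<omega> (\<theta>' x)) $ i = \<theta> (\<theta>' x) $ i + real n * a + \<beta> * of_int j"
    by (simp add: algebra_simps)
  then show "\<exists>k::int. \<theta> (prodop A n \<omega> (\<theta>' x)) $ i = \<theta> (\<theta>' x) $ i + real n * a + \<beta> * of_int k" ..
qed

lemma exists_shift_off_lattice:
  fixes \<beta> t :: real
  assumes \<beta>: "\<beta> > 0"
  shows "\<exists>u. 0 \<le> u \<and> u < \<beta> \<and> (\<forall>j::int. \<beta> / 2 \<le> \<bar>t - u + \<beta> * of_int j\<bar>)"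
proof -
  define m where "m = \<lfloor>(t - \<beta> / 2) / \<beta>\<rfloor>"
  define u where "u = t - \<beta> / 2 - \<beta> * of_int m"
  have "0 \<le> u" "u < \<beta>"
    unfolding u_def m_def using \<beta> floor_divide_lower[OF \<beta>, of "t - \<beta> / 2"]
      floor_divide_upper[OF \<beta>, of "t - \<beta> / 2"] by (simp_all add: algebra_simps)
  moreover have "\<beta> / 2 \<le> \<bar>t - u + \<beta> * of_int j\<bar>" for j :: int
  proof -
    have eq: "t - u + \<beta> * of_int j = \<beta> / 2 + \<beta> * of_int (m + j)"
      unfolding u_def by (simp add: algebra_simps)
    have "0 \<le> \<beta> * of_int (m + j) \<or> \<beta> * of_int (m + j) \<le> - \<beta>"
      using \<beta> mult_left_mono[of "of_int (m + j)" "-1" \<beta>] by (cases "m + j \<ge> 0") auto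
    then show ?thesis
      unfolding eq using abs_ge_self[of "\<beta> / 2 + \<beta> * of_int (m + j)"]
        abs_ge_minus_self[of "\<beta> / 2 + \<beta> * of_int (m + j)"] by linarith
  qed
  ultimately show ?thesis
    by blast
qed

section \<open>A test function of positive \<alpha>-mass\<close>

lemma exists_ball_emeasure_pos:
  fixes \<nu> :: "'a::real_normed_vector measure"
  assumes sets: "sets \<nu> = sets borel" and nonzero: "emeasure \<nu> (space \<nu>) \<noteq> 0"
  obtains R where "R > 0" "emeasure \<nu> (ball 0 R) > 0"
proof (rule ccontr)
  assume "\<not> thesis"
  then have "emeasure \<nu> (ball 0 (real (Suc n))) = 0" for n
    using that[of "real (Suc n)"] by (auto simp: zero_less_iff_neq_zero)
  then have "emeasure \<nu> (\<Union>n. ball 0 (real (Suc n))) = 0"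
    using sets by (intro emeasure_UN_eq_0) auto
  moreover have "x \<in> (\<Union>n. ball 0 (real (Suc n)))" for x :: 'a
  proof -
    obtain n where "norm x < real n"
      using reals_Archimedean2 by blast
    then show ?thesis
      by (intro UN_I[of n]) auto
  qed
  then have "(\<Union>n. ball (0::'a) (real (Suc n))) = space \<nu>"
    using sets_eq_imp_space_eq[OF sets] by auto
  ultimately show False
    using nonzero by simp
qed

lemma strip_in_sets_pair_borel:
  fixes c :: "'a::topological_space \<Rightarrow> real"
  assumes "B \<in> sets borel" and "c \<in> borel_measurable borel"
  shows "{(p, t). p \<in> B \<and> \<bar>t + c p\<bar> < w} \<in> sets (borel \<Otimes>\<^sub>M borel)"
proof -
  have "{(p, t). p \<in> B \<and> \<bar>t + c p\<bar> < w} =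
      {x \<in> space (borel \<Otimes>\<^sub>M borel). fst x \<in> B \<and> \<bar>snd x + c (fst x)\<bar> < w}"
    by (auto simp: space_pair_measure)
  also have "\<dots> \<in> sets (borel \<Otimes>\<^sub>M borel)"
    using assms by measurable
  finally show ?thesis .
qed

lemma emeasure_pair_lborel_strip:
  fixes \<nu> :: "'a::topological_space measure" and c :: "'a \<Rightarrow> real"
  assumes sets: "sets \<nu> = sets borel" and B: "B \<in> sets borel"
    and c: "c \<in> borel_measurable borel" and w: "w > 0"
  shows "emeasure (\<nu> \<Otimes>\<^sub>M lborel) {(p, t). p \<in> B \<and> \<bar>t + c p\<bar> < w} = ennreal (2 * w) * emeasure \<nu> B"
proof -
  let ?E = "{(p, t). p \<in> B \<and> \<bar>t + c p\<bar> < w}"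
  have "?E \<in> sets (\<nu> \<Otimes>\<^sub>M lborel)"
    using strip_in_sets_pair_borel[OF B c] by (simp add: sets cong: sets_pair_measure_cong)
  then have "emeasure (\<nu> \<Otimes>\<^sub>M lborel) ?E = (\<integral>\<^sup>+p. emeasure lborel (Pair p -` ?E) \<partial>\<nu>)"
    by (rule lborel.emeasure_pair_measure_alt)
  also have "\<dots> = (\<integral>\<^sup>+p. ennreal (2 * w) * indicator B p \<partial>\<nu>)"
  proof (rule nn_integral_cong)
    fix p
    have "Pair p -` ?E = (if p \<in> B then {- c p - w <..< - c p + w} else {})"
      by (auto split: abs_split)
    then show "emeasure lborel (Pair p -` ?E) = ennreal (2 * w) * indicator B p"
      using w by simp
  qed
  also have "\<dots> = ennreal (2 * w) * emeasure \<nu> B"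
    using B sets by (simp add: nn_integral_cmult_indicator)
  finally show ?thesis .
qed

definition bump :: "real \<Rightarrow> real \<Rightarrow> (real^'d \<Rightarrow> real) \<Rightarrow> real^'d \<Rightarrow> real" where
  "bump R w \<psi> z = max 0 (R - norm (proj z)) * max 0 (w - \<bar>\<psi> z\<bar>)"

lemma bump_nonneg: "0 \<le> bump R w \<psi> z"
  by (simp add: bump_def)

lemma bump_le: "R \<ge> 0 \<Longrightarrow> w \<ge> 0 \<Longrightarrow> bump R w \<psi> z \<le> R * w"
  unfolding bump_def by (intro mult_mono) auto

lemma bump_neq_zero_iff: "bump R w \<psi> z \<noteq> 0 \<longleftrightarrow> norm (proj z) < R \<and> \<bar>\<psi> z\<bar> < w"
  by (auto simp: bump_def max_def)

lemma continuous_on_bump: "topical_fun \<psi> \<Longrightarrow> continuous_on S (bump R w \<psi>)"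
  unfolding bump_def by (intro continuous_intros continuous_on_proj continuous_on_topical_fun)

lemma bump_compact_support:
  fixes \<psi> :: "real^'d \<Rightarrow> real"
  assumes \<psi>: "topical_fun \<psi>"
  shows "\<exists>K. compact K \<and> (\<forall>z. z \<notin> K \<longrightarrow> bump R w \<psi> z = 0)"
proof (intro exI conjI allI impI)
  let ?r = "R + (w + \<bar>\<psi> 0\<bar> + R) * norm (ones :: real^'d)"
  show "compact (cball (0 :: real^'d) ?r)"
    by simp
  fix z assume z: "z \<notin> cball (0 :: real^'d) ?r"
  show "bump R w \<psi> z = 0"
  proof (rule ccontr)
    assume "bump R w \<psi> z \<noteq> 0"
    then have "norm (proj z) < R" "\<bar>\<psi> z\<bar> < w"
      by (simp_all add: bump_neq_zero_iff)
    then have "norm z \<le> ?r"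
      using norm_le_proj_topical_fun[OF \<psi>, of z]
      by (smt (verit) mult_right_mono norm_ge_zero)
    then show False
      using z by simp
  qed
qed

lemma emeasure_bump_support:
  fixes \<phi> \<psi> :: "real^'d \<Rightarrow> real" and \<alpha> \<nu> :: "(real^'d) measure"
  assumes \<alpha>: "sets \<alpha> = sets borel" and \<nu>: "sets \<nu> = sets borel"
    and image: "distr \<alpha> (borel \<Otimes>\<^sub>M borel) (\<lambda>x. (proj x, \<phi> x)) = \<nu> \<Otimes>\<^sub>M lborel"
    and \<phi>: "topical_fun \<phi>" and \<psi>: "topical_fun \<psi>" and w: "w > 0"
  shows "emeasure \<alpha> {z \<in> space \<alpha>. bump R w \<psi> z \<noteq> 0} = ennreal (2 * w) * emeasure \<nu> (ball 0 R)"
proof -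
  let ?E = "{(p, t). p \<in> ball 0 R \<and> \<bar>t + (\<psi> p - \<phi> p)\<bar> < w}"
  have [measurable]: "\<psi> \<in> borel_measurable borel" "\<phi> \<in> borel_measurable borel"
    using \<phi> \<psi> by (simp_all add: borel_measurable_continuous_onI continuous_on_topical_fun)
  have [measurable]: "proj \<in> borel_measurable borel"
    by (intro borel_measurable_continuous_onI continuous_on_proj)
  have "bump R w \<psi> z \<noteq> 0 \<longleftrightarrow> (proj z, \<phi> z) \<in> ?E" for z
  proof -
    \<comment> \<open>\<open>\<psi> - \<phi>\<close> is invariant under adding multiples of \<open>ones\<close>\<close>
    have "\<psi> z = \<phi> z + (\<psi> (proj z) - \<phi> (proj z))"
      using topical_fun_proj[OF \<phi>, of z] topical_fun_proj[OF \<psi>, of z] by simp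
    then show ?thesis
      by (simp add: bump_neq_zero_iff add.assoc)
  qed
  then have "{z \<in> space \<alpha>. bump R w \<psi> z \<noteq> 0} = (\<lambda>x. (proj x, \<phi> x)) -` ?E \<inter> space \<alpha>"
    by blast
  also have "emeasure \<alpha> \<dots> = emeasure (\<nu> \<Otimes>\<^sub>M lborel) ?E"
  proof -
    have "(\<lambda>x. (proj x, \<phi> x)) \<in> measurable \<alpha> (borel \<Otimes>\<^sub>M borel)"
      unfolding measurable_cong_sets[OF \<alpha> refl] by measurable
    moreover have "?E \<in> sets (borel \<Otimes>\<^sub>M borel)"
      using strip_in_sets_pair_borel[of "ball 0 R" "\<lambda>p. \<psi> p - \<phi> p" w] by simp
    ultimately show ?thesis
      by (subst image[symmetric], rule emeasure_distr[symmetric])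
  qed
  also have "\<dots> = ennreal (2 * w) * emeasure \<nu> (ball 0 R)"
    using \<nu> w by (intro emeasure_pair_lborel_strip) auto
  finally show ?thesis .
qed

lemma integral_bump_pos:
  fixes \<phi> \<psi> :: "real^'d \<Rightarrow> real" and \<alpha> \<nu> :: "(real^'d) measure"
  assumes \<alpha>: "sets \<alpha> = sets borel" and \<nu>: "finite_measure \<nu>" "sets \<nu> = sets borel"
    and image: "distr \<alpha> (borel \<Otimes>\<^sub>M borel) (\<lambda>x. (proj x, \<phi> x)) = \<nu> \<Otimes>\<^sub>M lborel"
    and \<phi>: "topical_fun \<phi>" and \<psi>: "topical_fun \<psi>" and w: "w > 0"
    and R: "R > 0" "emeasure \<nu> (ball 0 R) > 0"
  shows "integral\<^sup>L \<alpha> (bump R w \<psi>) > 0"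
proof -
  let ?N = "{z \<in> space \<alpha>. bump R w \<psi> z \<noteq> 0}"
  have support: "emeasure \<alpha> ?N = ennreal (2 * w) * emeasure \<nu> (ball 0 R)"
    using emeasure_bump_support[OF \<alpha> \<nu>(2) image \<phi> \<psi> w] .
  have meas: "bump R w \<psi> \<in> borel_measurable \<alpha>"
    unfolding measurable_cong_sets[OF \<alpha> refl]
    by (intro borel_measurable_continuous_onI continuous_on_bump \<psi>)
  then have N: "?N \<in> sets \<alpha>"
    by measurable
  have int: "integrable \<alpha> (bump R w \<psi>)"
  proof (rule integrableI_bounded_set[OF N meas])
    show "emeasure \<alpha> ?N < \<infinity>"
      unfolding support using finite_measure.emeasure_finite[OF \<nu>(1)]
      by (simp add: ennreal_mult_less_top less_top)
    show "AE z in \<alpha>. z \<in> ?N \<longrightarrow> norm (bump R w \<psi> z) \<le> R * w"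
      using bump_le[of R w \<psi>] bump_nonneg[of R w \<psi>] R(1) w by (intro AE_I2) simp
    show "AE z in \<alpha>. z \<notin> ?N \<longrightarrow> bump R w \<psi> z = 0"
      using sets_eq_imp_space_eq[OF \<alpha>] by (intro AE_I2) simp
  qed
  have "emeasure \<alpha> ?N > 0"
    unfolding support using w R(2) by (simp add: ennreal_zero_less_mult_iff)
  then have "\<not> (AE z in \<alpha>. bump R w \<psi> z = 0)"
    using AE_iff_measurable[OF N refl] by simp
  then have "integral\<^sup>L \<alpha> (bump R w \<psi>) \<noteq> 0"
    using integral_nonneg_eq_0_iff_AE[OF int AE_I2[OF bump_nonneg]] by simp
  moreover have "integral\<^sup>L \<alpha> (bump R w \<psi>) \<ge> 0"
    by (simp add: bump_nonneg)
  ultimately show ?thesis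
    by linarith
qed

section \<open>Contradiction with the local limit theorem\<close>

lemma bounded_law_return_borel:
  fixes y :: "'a::euclidean_space"
  shows "prob_space (return borel y) \<and> sets (return borel y) = sets borel \<and>
    (\<exists>R. AE x in return borel y. norm x \<le> R)"
proof -
  have "Measurable.pred borel (\<lambda>x. norm x \<le> norm y)"
    by measurable
  then show ?thesis
    by (auto simp: prob_space_return AE_return intro!: exI[of _ "norm y"])
qed

lemma integral_orbit_vanishes_at_shift:
  fixes A :: "nat \<Rightarrow> 'w \<Rightarrow> real^'d \<Rightarrow> real^'d" and \<psi> h :: "real^'d \<Rightarrow> real"
  assumes \<psi>: "topical_fun \<psi>" and \<beta>: "\<beta> > 0"
    and lattice: "AE \<omega> in M. \<forall>n. \<exists>k::int. \<psi> (prodop A n \<omega> y) = \<psi> y + real n * a + \<beta> * of_int k"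
    and h: "\<And>z. h z \<noteq> 0 \<Longrightarrow> \<bar>\<psi> z\<bar> < \<beta> / 2"
  obtains u where "0 \<le> u" "u < \<beta>"
    "(\<integral>x. (\<integral>\<omega>. h (prodop A n \<omega> x - (real n * \<gamma>) *\<^sub>R ones - u *\<^sub>R ones) \<partial>M) \<partial>return borel y) = 0"
proof -
  obtain u where u: "0 \<le> u" "u < \<beta>"
    and off: "\<forall>j::int. \<beta> / 2 \<le> \<bar>\<psi> y + real n * a - real n * \<gamma> - u + \<beta> * of_int j\<bar>"
    using exists_shift_off_lattice[OF \<beta>] by blast
  have "AE \<omega> in M. h (prodop A n \<omega> y - (real n * \<gamma>) *\<^sub>R ones - u *\<^sub>R ones) = 0"
    using lattice
  proof (rule AE_mp, intro AE_I2 impI)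
    fix \<omega> assume "\<forall>n. \<exists>k::int. \<psi> (prodop A n \<omega> y) = \<psi> y + real n * a + \<beta> * of_int k"
    then obtain k :: int where k: "\<psi> (prodop A n \<omega> y) = \<psi> y + real n * a + \<beta> * of_int k"
      by blast
    have eq: "prodop A n \<omega> y - (real n * \<gamma>) *\<^sub>R ones - u *\<^sub>R ones = prodop A n \<omega> y + (- (real n * \<gamma> + u)) *\<^sub>R ones"
      by (simp add: algebra_simps)
    have "\<psi> (prodop A n \<omega> y - (real n * \<gamma>) *\<^sub>R ones - u *\<^sub>R ones) =
        \<psi> y + real n * a - real n * \<gamma> - u + \<beta> * of_int k"
      unfolding eq topical_fun_shift[OF \<psi>] k by simp
    then have "\<beta> / 2 \<le> \<bar>\<psi> (prodop A n \<omega> y - (real n * \<gamma>) *\<^sub>R ones - u *\<^sub>R ones)\<bar>"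
      using off by simp
    then show "h (prodop A n \<omega> y - (real n * \<gamma>) *\<^sub>R ones - u *\<^sub>R ones) = 0"
      using h not_less by blast
  qed
  then have inner: "(\<integral>\<omega>. h (prodop A n \<omega> y - (real n * \<gamma>) *\<^sub>R ones - u *\<^sub>R ones) \<partial>M) = 0"
    by (rule integral_eq_zero_AE)
  have "AE x in return borel y. x = y"
    by (simp add: AE_return)
  then have "AE x in return borel y. (\<integral>\<omega>. h (prodop A n \<omega> x - (real n * \<gamma>) *\<^sub>R ones - u *\<^sub>R ones) \<partial>M) = 0"
    by (rule AE_mp) (simp add: inner)
  then show ?thesis
    using that[OF u] by (simp add: integral_eq_zero_AE)
qed

lemma integral_gaussian_return_ge_half:
  fixes \<phi> :: "real^'d \<Rightarrow> real"
  assumes \<phi>: "topical_fun \<phi>" and \<sigma>: "\<sigma> > 0" and n: "n > 0"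
    and u: "0 \<le> u" "u < \<beta>" and large: "(\<beta> + \<bar>\<phi> y\<bar>)\<^sup>2 \<le> real n * \<sigma>\<^sup>2"
  shows "(\<integral>x. exp (- ((u + \<phi> x)\<^sup>2) / (2 * real n * \<sigma>\<^sup>2)) \<partial>return borel y) \<ge> 1 / 2"
proof -
  have "(\<lambda>x. exp (- ((u + \<phi> x)\<^sup>2) / (2 * real n * \<sigma>\<^sup>2))) \<in> borel_measurable borel"
    using continuous_on_topical_fun[OF \<phi>] n \<sigma>
    by (intro borel_measurable_continuous_onI continuous_intros) auto
  then have "(\<integral>x. exp (- ((u + \<phi> x)\<^sup>2) / (2 * real n * \<sigma>\<^sup>2)) \<partial>return borel y) =
      exp (- ((u + \<phi> y)\<^sup>2) / (2 * real n * \<sigma>\<^sup>2))"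
    by (simp add: integral_return)
  moreover have "\<bar>u + \<phi> y\<bar> \<le> \<bar>\<beta> + \<bar>\<phi> y\<bar>\<bar>"
    using u by (simp add: abs_le_iff) linarith
  then have "(u + \<phi> y)\<^sup>2 / (2 * real n * \<sigma>\<^sup>2) \<le> 1 / 2"
    using large n \<sigma> by (simp add: abs_le_square_iff field_simps)
  ultimately show ?thesis
    using exp_ge_add_one_self[of "- (u + \<phi> y)\<^sup>2 / (2 * real n * \<sigma>\<^sup>2)"] by simp
qed

lemma lattice_orbit_contradicts_llt:
  fixes A :: "nat \<Rightarrow> 'w \<Rightarrow> real^'d \<Rightarrow> real^'d" and \<psi> \<phi> h :: "real^'d \<Rightarrow> real"
  assumes \<psi>: "topical_fun \<psi>" and \<phi>: "topical_fun \<phi>" and \<beta>: "\<beta> > 0" and \<sigma>: "\<sigma> > 0"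
    and lattice: "AE \<omega> in M. \<forall>n. \<exists>k::int. \<psi> (prodop A n \<omega> y) = \<psi> y + real n * a + \<beta> * of_int k"
    and h: "\<And>z. h z \<noteq> 0 \<Longrightarrow> \<bar>\<psi> z\<bar> < \<beta> / 2" and I: "I > 0"
    and llt: "\<And>e. e > 0 \<Longrightarrow> \<forall>\<^sub>F n in sequentially. \<forall>u::real.
      \<bar>\<sigma> * sqrt (2 * pi * real n) *
         (\<integral>x. (\<integral>\<omega>. h (prodop A n \<omega> x - (real n * \<gamma>) *\<^sub>R ones - u *\<^sub>R ones) \<partial>M) \<partial>return borel y)
       - (\<integral>x. exp (- ((u + \<phi> x)\<^sup>2) / (2 * real n * \<sigma>\<^sup>2)) \<partial>return borel y) * I\<bar> \<le> e"
  shows False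
proof -
  define N where "N = nat \<lceil>(\<beta> + \<bar>\<phi> y\<bar>)\<^sup>2 / \<sigma>\<^sup>2\<rceil> + 1"
  have "I / 4 > 0"
    using I by simp
  obtain n where n: "n \<ge> N" and close: "\<forall>u::real.
      \<bar>\<sigma> * sqrt (2 * pi * real n) *
         (\<integral>x. (\<integral>\<omega>. h (prodop A n \<omega> x - (real n * \<gamma>) *\<^sub>R ones - u *\<^sub>R ones) \<partial>M) \<partial>return borel y)
       - (\<integral>x. exp (- ((u + \<phi> x)\<^sup>2) / (2 * real n * \<sigma>\<^sup>2)) \<partial>return borel y) * I\<bar> \<le> I / 4"
    using eventually_happens'[OF sequentially_bot eventually_conj[OF eventually_ge_at_top llt[OF \<open>I / 4 > 0\<close>]]]
    by blast
  let ?G = "\<lambda>u. \<integral>x. exp (- ((u + \<phi> x)\<^sup>2) / (2 * real n * \<sigma>\<^sup>2)) \<partial>return borel y"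
  obtain u where u: "0 \<le> u" "u < \<beta>"
    and zero: "(\<integral>x. (\<integral>\<omega>. h (prodop A n \<omega> x - (real n * \<gamma>) *\<^sub>R ones - u *\<^sub>R ones) \<partial>M) \<partial>return borel y) = 0"
    using integral_orbit_vanishes_at_shift[OF \<psi> \<beta> lattice h] by blast
  have "(\<beta> + \<bar>\<phi> y\<bar>)\<^sup>2 / \<sigma>\<^sup>2 \<le> real n"
    using n real_nat_ceiling_ge[of "(\<beta> + \<bar>\<phi> y\<bar>)\<^sup>2 / \<sigma>\<^sup>2"] unfolding N_def by linarith
  then have large: "(\<beta> + \<bar>\<phi> y\<bar>)\<^sup>2 \<le> real n * \<sigma>\<^sup>2"
    using \<sigma> by (simp add: field_simps)
  have "n > 0"
    using n by (simp add: N_def)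
  then have "?G u \<ge> 1 / 2"
    by (rule integral_gaussian_return_ge_half[OF \<phi> \<sigma> _ u large])
  then have "I / 2 \<le> ?G u * I"
    using mult_right_mono[of "1 / 2" _ I] I by simp
  moreover have "?G u * I \<le> I / 4"
    using close[rule_format, of u] unfolding zero by simp
  ultimately show False
    using I by linarith
qed

theorem proposition2p4:
  fixes M :: "'w measure"
    and A :: "nat \<Rightarrow> 'w \<Rightarrow> real^'d \<Rightarrow> real^'d"
    and \<phi> :: "real^'d \<Rightarrow> real"
    and \<gamma> \<sigma> :: real
    and \<nu>0 :: "(real^'d) measure"
    and \<alpha> :: "(real^'d) measure"
  assumes P: "prob_space M"
    and iid_indep: "prob_space.indep_vars M (\<lambda>_. op_space) A {1..}"
    and iid_meas: "\<forall>n\<ge>1. A n \<in> measurable M op_space"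
    and iid_dist: "\<forall>n\<ge>1. distr M op_space (A n) = distr M op_space (A 1)"
    and topical: "\<forall>n\<ge>1. \<forall>\<omega>\<in>space M. topical_op (A n \<omega>)"
    and memory_loss: "\<exists>N\<ge>1. measure M {\<omega> \<in> space M. rank_one (prodop A N \<omega>)} > 0"
    and lyapunov: "AE \<omega> in M. (\<lambda>n. (1 / real n) *\<^sub>R prodop A n \<omega> 0) \<longlonglongrightarrow> \<gamma> *\<^sub>R ones"
    and nu0_inv: "invariant_pr M (A 1) \<nu>0"
    and nu0_unique: "\<forall>\<nu>. invariant_pr M (A 1) \<nu> \<longrightarrow> \<nu> = \<nu>0"
    and phi: "topical_fun \<phi>"
    and sigma_pos: "\<sigma> > 0"
    and alpha_sf: "sigma_finite_measure \<alpha>"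
    and alpha_sets: "sets \<alpha> = sets borel"
    and alpha_image: "distr \<alpha> (borel \<Otimes>\<^sub>M borel) (\<lambda>x. (proj x, \<phi> x)) = \<nu>0 \<Otimes>\<^sub>M lborel"
    and LLT: "\<forall>(law :: (real^'d) measure) (h :: real^'d \<Rightarrow> real).
       prob_space law \<and> sets law = sets borel \<and> (\<exists>R. AE x in law. norm x \<le> R) \<and>
       continuous_on UNIV h \<and> (\<exists>K. compact K \<and> (\<forall>x. x \<notin> K \<longrightarrow> h x = 0)) \<longrightarrow>
       (\<forall>e>0. \<forall>\<^sub>F n in sequentially. \<forall>u::real.
          \<bar>\<sigma> * sqrt (2 * pi * real n) *
             (\<integral>x. (\<integral>\<omega>. h (prodop A n \<omega> x - (real n * \<gamma>) *\<^sub>R ones - u *\<^sub>R ones) \<partial>M) \<partial>law)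
           - (\<integral>x. exp (- ((u + \<phi> x)\<^sup>2) / (2 * real n * \<sigma>\<^sup>2)) \<partial>law) * (\<integral>x. h x \<partial>\<alpha>)\<bar> \<le> e)"
  shows "\<not> alg_arithmetic (supp_law M (A 1))"
proof
  let ?S = "supp_law M (A 1)"
  assume "alg_arithmetic ?S"
  then obtain a b :: real and \<theta> where \<theta>: "topical_op \<theta>"
    and arith: "\<forall>B\<in>?S. \<forall>\<theta>'\<in>gen_semigroup ?S. rank_one \<theta>' \<longrightarrow>
      (\<forall>x. \<exists>k::int. \<theta> (B (\<theta>' x)) - \<theta> (\<theta>' x) = (a + b * of_int k) *\<^sub>R ones)"
    unfolding alg_arithmetic_def by blast
  have "finite_measure M"
    using P by (simp add: prob_space_def)
  then have good: "AE \<omega> in M. \<forall>n\<ge>1. A n \<omega> \<in> ?S"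
    using iid_meas iid_dist topical by (rule AE_iid_in_supp_law)
  obtain N where N: "N \<ge> 1" "measure M {\<omega> \<in> space M. rank_one (prodop A N \<omega>)} > 0"
    using memory_loss by blast
  obtain \<omega>0 where \<omega>0: "\<omega>0 \<in> {\<omega> \<in> space M. rank_one (prodop A N \<omega>)}" "\<forall>n\<ge>1. A n \<omega>0 \<in> ?S"
    using ex_in_pos_measure_AE[OF N(2) good] by blast
  define \<psi> where "\<psi> z = \<theta> z $ undefined" for z \<comment> \<open>any coordinate of \<open>\<theta>\<close> will do\<close>
  define y where "y = prodop A N \<omega>0 0"
  obtain \<beta> :: real where \<beta>: "\<beta> > 0" "\<forall>k::int. \<exists>j::int. b * of_int k = \<beta> * of_int j"
    using int_multiples_in_pos_lattice by blast
  have "\<forall>B\<in>?S. topical_op B"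
    by (simp add: supp_law_def)
  then have lattice: "AE \<omega> in M. \<forall>n. \<exists>k::int. \<psi> (prodop A n \<omega> y) = \<psi> y + real n * a + \<beta> * of_int k"
    using AE_lattice_orbit[OF arith _ good prodop_in_gen_semigroup[where A = A and \<omega> = \<omega>0, OF \<omega>0(2) N(1)] _ \<beta>(2)]
      \<omega>0(1) unfolding \<psi>_def y_def by blast
  have \<psi>: "topical_fun \<psi>"
    unfolding \<psi>_def by (rule topical_fun_component[OF \<theta>])
  have \<nu>0: "prob_space \<nu>0" "sets \<nu>0 = sets borel"
    using nu0_inv by (simp_all add: invariant_pr_def)
  then have "emeasure \<nu>0 (space \<nu>0) \<noteq> 0"
    by (simp add: prob_space.emeasure_space_1)
  then obtain R where R: "R > 0" "emeasure \<nu>0 (ball 0 R) > 0"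
    by (rule exists_ball_emeasure_pos[OF \<nu>0(2)])
  have "finite_measure \<nu>0"
    using \<nu>0(1) by (simp add: prob_space_def)
  have I: "integral\<^sup>L \<alpha> (bump R (\<beta> / 2) \<psi>) > 0"
    using \<beta>(1) by (intro integral_bump_pos[OF alpha_sets \<open>finite_measure \<nu>0\<close> \<nu>0(2) alpha_image phi \<psi> _ R]) simp
  have admissible: "prob_space (return borel y) \<and> sets (return borel y) = sets borel \<and>
      (\<exists>R. AE x in return borel y. norm x \<le> R) \<and> continuous_on UNIV (bump R (\<beta> / 2) \<psi>) \<and>
      (\<exists>K. compact K \<and> (\<forall>x. x \<notin> K \<longrightarrow> bump R (\<beta> / 2) \<psi> x = 0))"
    using bounded_law_return_borel[of y] continuous_on_bump[OF \<psi>] bump_compact_support[OF \<psi>] by simp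
  show False
    by (rule lattice_orbit_contradicts_llt[where h = "bump R (\<beta> / 2) \<psi>",
          OF \<psi> phi \<beta>(1) sigma_pos lattice _ I LLT[rule_format, OF admissible]])
      (simp add: bump_neq_zero_iff)
qed

end
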